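(* Every $\mathrm{NP}_2$-irreducible digital image is $\mathrm{NP}_2$-rigid.
   Context: A digital image is a finite set $X\subset\mathbb{Z}^n$ with a reflexive symmetric adjacency relation (a finite reflexive graph); continuous maps send adjacent points to adjacent points. On products, $\mathrm{NP}_2$ declares two tuples adjacent iff coordinates are adjacent in at most 2 positions and equal elsewhere. An $\mathrm{NP}_2$-homotopy from $f$ to $g:X\to Y$ is an $\mathrm{NP}_2$-continuous $H:X\times[0,m]_{\mathbb{Z}}\to Y$ (interval with $a\sim b\iff|a-b|\le1$) with $H(\cdot,0)=f$, $H(\cdot,m)=g$; write $f\simeq_2 g$. $X,Y$ are $\mathrm{NP}_2$-homotopy equivalent if there are continuous $f:X\to Y$, $g:Y\to X$ with $g\circ f\simeq_2\mathrm{id}_X$, $f\circ g\simeq_2\mathrm{id}_Y$. $X$ is $\mathrm{NP}_2$-irreducible if it is not $\mathrm{NP}_2$-homotopy equivalent to a digital image with fewer points. $X$ is $\mathrm{NP}_2$-rigid if $\mathrm{id}_X$ is not $\mathrm{NP}_2$-homotopic to any map $X\to X$ other than itself. *)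

theory Defs
  imports Main
begin

text \<open>Points of Z^n are represented as integer lists of length n.
A digital image is a finite set X of such points (all of one length n)
together with a reflexive, symmetric adjacency relation A on X.\<close>

type_synonym point = "int list"

definition digital_image :: "point set \<Rightarrow> (point \<Rightarrow> point \<Rightarrow> bool) \<Rightarrow> bool" where
  "digital_image X A \<longleftrightarrow> finite X \<and> (\<exists>n. \<forall>x\<in>X. length x = n)
     \<and> (\<forall>x\<in>X. A x x) \<and> (\<forall>x\<in>X. \<forall>y\<in>X. A x y \<longrightarrow> A y x)"

definition dcont :: "point set \<Rightarrow> (point \<Rightarrow> point \<Rightarrow> bool) \<Rightarrow> point set \<Rightarrow> (point \<Rightarrow> point \<Rightarrow> bool)
    \<Rightarrow> (point \<Rightarrow> point) \<Rightarrow> bool" where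
  "dcont X A Y B f \<longleftrightarrow> (\<forall>x\<in>X. f x \<in> Y) \<and> (\<forall>x\<in>X. \<forall>x'\<in>X. A x x' \<longrightarrow> B (f x) (f x'))"

definition interval_adj :: "nat \<Rightarrow> nat \<Rightarrow> bool" where
  "interval_adj a b \<longleftrightarrow> (a \<le> b + 1 \<and> b \<le> a + 1)"

text \<open>NP_2 adjacency on the two-factor product X x [0,m]: coordinates adjacent
(adjacency being reflexive, this includes equality) in at most 2 positions
and equal elsewhere.\<close>
definition np2_adj :: "(point \<Rightarrow> point \<Rightarrow> bool) \<Rightarrow> point \<times> nat \<Rightarrow> point \<times> nat \<Rightarrow> bool" where
  "np2_adj A p q \<longleftrightarrow>
     card {i::nat. i < 2 \<and> ((i = 0 \<and> fst p \<noteq> fst q) \<or> (i = 1 \<and> snd p \<noteq> snd q))} \<le> 2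
     \<and> (fst p = fst q \<or> A (fst p) (fst q))
     \<and> (snd p = snd q \<or> interval_adj (snd p) (snd q))"

definition np2_homotopic :: "point set \<Rightarrow> (point \<Rightarrow> point \<Rightarrow> bool) \<Rightarrow> point set \<Rightarrow> (point \<Rightarrow> point \<Rightarrow> bool)
    \<Rightarrow> (point \<Rightarrow> point) \<Rightarrow> (point \<Rightarrow> point) \<Rightarrow> bool" where
  "np2_homotopic X A Y B f g \<longleftrightarrow>
     (\<exists>(m::nat) (H :: point \<Rightarrow> nat \<Rightarrow> point).
        (\<forall>x\<in>X. \<forall>t\<le>m. H x t \<in> Y)
      \<and> (\<forall>x\<in>X. \<forall>s\<le>m. \<forall>x'\<in>X. \<forall>t\<le>m. np2_adj A (x, s) (x', t) \<longrightarrow> B (H x s) (H x' t))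
      \<and> (\<forall>x\<in>X. H x 0 = f x) \<and> (\<forall>x\<in>X. H x m = g x))"

definition np2_homotopy_equivalent :: "point set \<Rightarrow> (point \<Rightarrow> point \<Rightarrow> bool) \<Rightarrow> point set
    \<Rightarrow> (point \<Rightarrow> point \<Rightarrow> bool) \<Rightarrow> bool" where
  "np2_homotopy_equivalent X A Y B \<longleftrightarrow>
     (\<exists>f g. dcont X A Y B f \<and> dcont Y B X A g
        \<and> np2_homotopic X A X A (g \<circ> f) id \<and> np2_homotopic Y B Y B (f \<circ> g) id)"

definition np2_irreducible :: "point set \<Rightarrow> (point \<Rightarrow> point \<Rightarrow> bool) \<Rightarrow> bool" where
  "np2_irreducible X A \<longleftrightarrow>
     \<not> (\<exists>Y B. digital_image Y B \<and> card Y < card X \<and> np2_homotopy_equivalent X A Y B)"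

text \<open>Maps X -> X are compared on X only.\<close>
definition np2_rigid :: "point set \<Rightarrow> (point \<Rightarrow> point \<Rightarrow> bool) \<Rightarrow> bool" where
  "np2_rigid X A \<longleftrightarrow>
     (\<forall>g. (\<forall>x\<in>X. g x \<in> X) \<longrightarrow> np2_homotopic X A X A id g \<longrightarrow> (\<forall>x\<in>X. g x = x))"

end

theory Submission
  imports Defs
begin

text \<open>If a homotopy starting at the identity ever moves a point, look at the first time step
  \<open>t \<rightarrow> t + 1\<close> at which some \<open>w\<close> is sent to \<open>y \<noteq> w\<close>. Continuity of the homotopy between
  the stationary level \<open>t\<close> and level \<open>t + 1\<close> says that every neighbour of \<open>w\<close> is adjacent to \<open>y\<close>.
  Such a dominated point can be collapsed onto \<open>y\<close>: the retraction sending \<open>w\<close> to \<open>y\<close> is one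
  homotopy step away from the identity, so \<open>X\<close> is homotopy equivalent to \<open>X - {w}\<close>, contradicting
  irreducibility.\<close>

lemma np2_adj_iff:
  "np2_adj A p q \<longleftrightarrow>
     (fst p = fst q \<or> A (fst p) (fst q)) \<and> (snd p = snd q \<or> interval_adj (snd p) (snd q))"
proof -
  have "card {i::nat. i < 2 \<and> ((i = 0 \<and> fst p \<noteq> fst q) \<or> (i = 1 \<and> snd p \<noteq> snd q))}
      \<le> card {..<(2::nat)}"
    by (rule card_mono) auto
  then show ?thesis unfolding np2_adj_def by simp
qed

lemma np2_homotopic_one_step:
  assumes refl: "\<forall>x\<in>X. A x x"
    and f: "dcont X A Y B f" and g: "dcont X A Y B g"
    and fg: "\<And>x x'. x \<in> X \<Longrightarrow> x' \<in> X \<Longrightarrow> A x x' \<Longrightarrow> B (f x) (g x')"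
    and gf: "\<And>x x'. x \<in> X \<Longrightarrow> x' \<in> X \<Longrightarrow> A x x' \<Longrightarrow> B (g x) (f x')"
  shows "np2_homotopic X A Y B f g"
  unfolding np2_homotopic_def
proof (intro exI[of _ "1::nat"] exI[of _ "\<lambda>x s. if s = 0 then f x else g x"] conjI ballI allI impI)
  fix x s x' t
  assume "x \<in> X" "s \<le> (1::nat)" "x' \<in> X" "t \<le> (1::nat)" "np2_adj A (x, s) (x', t)"
  then show "B (if s = 0 then f x else g x) (if t = 0 then f x' else g x')"
    using refl f g fg gf unfolding np2_adj_iff dcont_def by auto
qed (use f g in \<open>auto simp: dcont_def\<close>)

lemma dominated_point_removal:
  assumes di: "digital_image X A" and xX: "x \<in> X" and yX: "y \<in> X" and "y \<noteq> x"
    and dom: "\<And>z. z \<in> X \<Longrightarrow> A z x \<Longrightarrow> A z y"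
  shows "np2_homotopy_equivalent X A (X - {x}) A"
proof -
  have refl: "\<forall>z\<in>X. A z z"
    and sym: "\<And>z z'. z \<in> X \<Longrightarrow> z' \<in> X \<Longrightarrow> A z z' \<Longrightarrow> A z' z"
    using di unfolding digital_image_def by auto
  define r where "r z = (if z = x then y else z)" for z
  have rX: "r z \<in> X" if "z \<in> X" for z
    using that yX by (simp add: r_def)
  have r_left: "A (r z) z'" if "z \<in> X" "z' \<in> X" "A z z'" for z z'
    using that dom[of z'] sym[of z z'] sym[of z' y] yX by (auto simp: r_def)
  have r_right: "A z (r z')" if "z \<in> X" "z' \<in> X" "A z z'" for z z'
    using that dom by (auto simp: r_def)
  have r_both: "A (r z) (r z')" if "z \<in> X" "z' \<in> X" "A z z'" for z z'
    using r_left r_right rX that by blast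
  have "dcont X A (X - {x}) A r"
    using r_both rX \<open>y \<noteq> x\<close> unfolding dcont_def r_def by auto
  moreover have "dcont (X - {x}) A X A r"
    using r_both rX unfolding dcont_def by auto
  moreover have "np2_homotopic X A X A (r \<circ> r) id"
  proof (rule np2_homotopic_one_step)
    show "dcont X A X A (r \<circ> r)"
      using r_both rX unfolding dcont_def by simp
  qed (use refl r_left r_right in \<open>auto simp: dcont_def r_def\<close>)
  moreover have "np2_homotopic (X - {x}) A (X - {x}) A (r \<circ> r) id"
    by (rule np2_homotopic_one_step) (use refl in \<open>auto simp: dcont_def r_def\<close>)
  ultimately show ?thesis
    unfolding np2_homotopy_equivalent_def by blast
qed

lemma np2_irreducible_no_dominated_point:
  assumes "digital_image X A" and "np2_irreducible X A"
    and "x \<in> X" and "y \<in> X" and "\<And>z. z \<in> X \<Longrightarrow> A z x \<Longrightarrow> A z y"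
  shows "y = x"
proof (rule ccontr)
  assume "y \<noteq> x"
  then have "np2_homotopy_equivalent X A (X - {x}) A"
    using dominated_point_removal assms by blast
  moreover have "digital_image (X - {x}) A"
    using assms(1) unfolding digital_image_def by auto
  moreover have "card (X - {x}) < card X"
    using assms(1,3) unfolding digital_image_def by (meson card_Diff1_less)
  ultimately show False
    using assms(2) unfolding np2_irreducible_def by blast
qed

lemma np2_homotopy_first_move_dominated:
  assumes Hc: "\<forall>x\<in>X. \<forall>s\<le>m. \<forall>x'\<in>X. \<forall>t\<le>m. np2_adj A (x, s) (x', t) \<longrightarrow> A (H x s) (H x' t)"
    and "Suc t \<le> m" and stationary: "\<forall>z\<in>X. H z t = z"
    and "w \<in> X" and "z \<in> X" and "A z w"
  shows "A z (H w (Suc t))"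
proof -
  have "np2_adj A (z, t) (w, Suc t)"
    using \<open>A z w\<close> unfolding np2_adj_iff interval_adj_def by simp
  then have "A (H z t) (H w (Suc t))"
    using Hc assms(2,4,5) by (meson Suc_leD)
  then show ?thesis
    using stationary \<open>z \<in> X\<close> by simp
qed

theorem mainTheorem11:
  assumes "digital_image X A"
      and "np2_irreducible X A"
  shows "np2_rigid X A"
  unfolding np2_rigid_def
proof (intro allI impI ballI)
  fix g x
  assume "np2_homotopic X A X A id g" and "x \<in> X"
  then obtain m H where HX: "\<forall>x\<in>X. \<forall>t\<le>m. H x t \<in> X"
    and Hc: "\<forall>x\<in>X. \<forall>s\<le>m. \<forall>x'\<in>X. \<forall>t\<le>m. np2_adj A (x, s) (x', t) \<longrightarrow> A (H x s) (H x' t)"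
    and H0: "\<forall>x\<in>X. H x 0 = x" and Hm: "\<forall>x\<in>X. H x m = g x"
    unfolding np2_homotopic_def by auto
  have "\<forall>z\<in>X. H z t = z" if "t \<le> m" for t
    using that
  proof (induction t)
    case (Suc t)
    then have "\<forall>z\<in>X. H z t = z" by simp
    then show ?case
      using np2_irreducible_no_dominated_point[OF assms, of _ "H _ (Suc t)"]
        np2_homotopy_first_move_dominated[OF Hc Suc.prems] HX Suc.prems
      by metis
  qed (use H0 in simp)
  then show "g x = x"
    using Hm \<open>x \<in> X\<close> by auto
qed

end
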